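(* Let $K$ be an increasing sequence of positive integers such that $\{\mathfrak F^{-1}(K_n)\}$ is equidistributed. Then $K$ satisfies strong Benford's Law under $\mathcal F$-expansion, i.e. for every integer $s\ge2$ and $\mathbf b\in\mathcal F_s$, $$\lim_{n\to\infty}\frac{\#\{k\le n:\mathrm{LB}_s(K_k)=\mathbf b\}}{n}=\log_\phi\frac{\widetilde{\mathbf b}\cdot\widehat F}{\mathbf b\cdot\widehat F}.$$
   Context: $F$: $F_1=1,F_2=2,F_{n+2}=F_{n+1}+F_n$. Zeckendorf expansion $m=\sum_{k=1}^M\epsilon(k)F_{M-k+1}$ (unique, $\epsilon(k)\in\{0,1\}$, $\epsilon(1)=1$, $\epsilon(k)\epsilon(k+1)=0$); $\mathrm{LB}_s(m)=(\epsilon(1),\dots,\epsilon(s))$ if $M\ge s$. $\mathcal F_s$ ($s\ge2$): all $\mathrm{LB}_s(m)$, listed $\mathbf b_1,\dots,\mathbf b_\ell$ with $1+\mathbf b_k*F=\mathbf b_{k+1}*F$ where $\mathbf b*F=\sum_{k}\mathbf b(k)F_{s-k+1}$; $\mathbf b_{\ell+1}:=(1,0,1,0,\dots,1,0,1,1)$ if $s$ even, $(1,0,1,0,\dots,1,1,0)$ if $s$ odd; $\widetilde{\mathbf b_k}=\mathbf b_{k+1}$. $\omega=\phi^{-1}$ ($\phi$ golden ratio), $\mathbf b\cdot\widehat F=\sum_k\mathbf b(k)\omega^{k-1}$. $\mathfrak F(x)=\frac{\phi}{\sqrt5}(\phi^x+\phi^{-x}\cos(\pi x)\phi^{-2})$,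 increasing on $[1,\infty)$, inverse $\mathfrak F^{-1}$. A real sequence $(x_n)$ has $\{x_n\}$ equidistributed if $\lim_n\#\{k\le n:\{x_k\}\le\beta\}/n=\beta$ for all $\beta\in[0,1]$, $\{\cdot\}$ denoting fractional part. *)

theory Defs
  imports Complex_Main
begin

text \<open>Fibonacci numbers with F_1 = 1, F_2 = 2 (zF 0 = 1 is an unused auxiliary value).\<close>
fun zF :: "nat \<Rightarrow> nat" where
  "zF 0 = 1"
| "zF (Suc 0) = 1"
| "zF (Suc (Suc n)) = zF (Suc n) + zF n"

text \<open>eps is a Zeckendorf expansion of m; eps ! (k-1) is epsilon(k), M = length eps.\<close>
definition is_zeck :: "nat \<Rightarrow> nat list \<Rightarrow> bool" where
  "is_zeck m eps \<longleftrightarrow> eps \<noteq> [] \<and> hd eps = 1 \<and> set eps \<subseteq> {0, 1}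
     \<and> (\<forall>k. Suc k < length eps \<longrightarrow> eps ! k * eps ! (Suc k) = 0)
     \<and> m = (\<Sum>k<length eps. eps ! k * zF (length eps - k))"

definition zeck :: "nat \<Rightarrow> nat list" where
  "zeck m = (THE eps. is_zeck m eps)"

definition LB :: "nat \<Rightarrow> nat \<Rightarrow> nat list option" where
  "LB s m = (if 0 < m \<and> s \<le> length (zeck m) then Some (take s (zeck m)) else None)"

definition FS :: "nat \<Rightarrow> nat list set" where
  "FS s = {b. \<exists>m. LB s m = Some b}"

text \<open>b * F = sum_k b(k) F_{s-k+1}.\<close>
definition valF :: "nat \<Rightarrow> nat list \<Rightarrow> nat" where
  "valF s b = (\<Sum>k<s. b ! k * zF (s - k))"

text \<open>b_{l+1}: (1,0,...,1,0,1,1) for s even, (1,0,...,1,1,0) for s odd.\<close>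
definition last_block :: "nat \<Rightarrow> nat list" where
  "last_block s = map (\<lambda>i. if even s then (if odd i \<or> i = s then 1 else 0)
                               else (if (odd i \<and> i \<noteq> s) \<or> i = s - 1 then 1 else 0)) [1..<s+1]"

definition btilde :: "nat \<Rightarrow> nat list \<Rightarrow> nat list" where
  "btilde s b = (if \<exists>c\<in>FS s. valF s c = valF s b + 1
                 then (THE c. c \<in> FS s \<and> valF s c = valF s b + 1)
                 else last_block s)"

definition phi :: real where "phi = (1 + sqrt 5) / 2"
definition omega :: real where "omega = 1 / phi"

text \<open>b . F-hat = sum_k b(k) omega^(k-1).\<close>
definition dotw :: "nat list \<Rightarrow> real" where
  "dotw b = (\<Sum>k<length b. real (b ! k) * omega ^ k)"

definition frakF :: "real \<Rightarrow> real" where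
  "frakF x = phi / sqrt 5 * (phi powr x + phi powr (-x) * cos (pi * x) * phi powr (-2))"

definition frakF_inv :: "real \<Rightarrow> real" where
  "frakF_inv y = (THE x. 1 \<le> x \<and> frakF x = y)"

definition equidistributed_frac :: "(nat \<Rightarrow> real) \<Rightarrow> bool" where
  "equidistributed_frac x \<longleftrightarrow> (\<forall>\<beta>\<in>{0..1}.
     (\<lambda>n. real (card {k\<in>{1..n}. frac (x k) \<le> \<beta>}) / real n) \<longlonglongrightarrow> \<beta>)"

end

theory Submission
  imports Defs
begin

text \<open>If \<open>m\<close> has \<open>M\<close> Zeckendorf digits, Binet's formula gives
  \<open>\<surd>5 m = \<phi>^(M+1) dotw (zeck m) + O(1)\<close>. On the other hand \<open>\<surd>5 frakF x = \<phi>^(x+1) + O(1)\<close> and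
  \<open>frakF_inv m\<close> has integer part \<open>M\<close>, so \<open>\<phi>^(frac (frakF_inv m))\<close> approximates \<open>dotw (zeck m)\<close> up
  to \<open>O(\<phi>^-M)\<close>. The numbers with \<open>M\<close> digits and leading block \<open>b\<close> form an interval whose weights
  fill \<open>[dotw b, dotw b + block_gap b)\<close>, and incrementing \<open>b\<close> digit by digit shows
  \<open>dotw b + block_gap b = dotw (btilde s b)\<close>. Hence for large \<open>m\<close> the event \<open>LB s m = Some b\<close> says,
  up to a vanishing margin, that \<open>frac (frakF_inv m)\<close> lies between \<open>log \<phi> (dotw b)\<close> and
  \<open>log \<phi> (dotw (btilde s b))\<close>, and equidistribution of these fractional parts gives the density.\<close>

section \<open>Zeckendorf digit strings\<close>

fun fib_admissible :: "nat list \<Rightarrow> bool" where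
  "fib_admissible [] = True"
| "fib_admissible [d] = (d \<le> 1)"
| "fib_admissible (d # e # l) = (d \<le> 1 \<and> d * e = 0 \<and> fib_admissible (e # l))"

fun fib_val :: "nat list \<Rightarrow> nat" where
  "fib_val [] = 0"
| "fib_val (d # l) = d * zF (Suc (length l)) + fib_val l"

lemma zF_pos: "0 < zF n"
  by (induction n rule: zF.induct) auto

lemma zF_neq_0 [simp]: "zF n \<noteq> 0"
  using zF_pos[of n] by simp

lemma zF_le_Suc: "zF n \<le> zF (Suc n)"
  by (cases n rule: zF.cases) auto

lemma zF_mono: "m \<le> n \<Longrightarrow> zF m \<le> zF n"
  by (induction n) (auto simp: le_Suc_eq intro: order_trans[OF _ zF_le_Suc])

lemma self_le_zF: "n \<le> zF n"
proof (induction n rule: zF.induct)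
  case (3 n)
  then show ?case using zF_pos[of n] by simp
qed auto

lemma fib_admissible_Cons:
  "fib_admissible (d # l) \<longleftrightarrow> d \<le> 1 \<and> fib_admissible l \<and> (l \<noteq> [] \<longrightarrow> d * hd l = 0)"
  by (cases l) auto

lemma fib_admissible_append:
  "fib_admissible (b @ t) \<longleftrightarrow>
     fib_admissible b \<and> fib_admissible t \<and> (b \<noteq> [] \<and> t \<noteq> [] \<longrightarrow> last b * hd t = 0)"
  by (induction b) (auto simp: fib_admissible_Cons)

lemma fib_admissible_replicate_0: "fib_admissible (replicate n 0)"
  by (induction n) (auto simp: fib_admissible_Cons)

lemma fib_admissible_digit_le_1: "fib_admissible l \<Longrightarrow> x \<in> set l \<Longrightarrow> x \<le> 1"
  by (induction l rule: fib_admissible.induct) auto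

lemma fib_admissible_iff:
  "fib_admissible l \<longleftrightarrow>
     set l \<subseteq> {0, 1} \<and> (\<forall>k. Suc k < length l \<longrightarrow> l ! k * l ! Suc k = 0)"
proof (induction l rule: fib_admissible.induct)
  case (3 d e l)
  have "(\<forall>k. Suc k < length (d # e # l) \<longrightarrow> (d # e # l) ! k * (d # e # l) ! Suc k = 0) \<longleftrightarrow>
        d * e = 0 \<and> (\<forall>k. Suc k < length (e # l) \<longrightarrow> (e # l) ! k * (e # l) ! Suc k = 0)"
    by (metis (no_types, lifting) Suc_less_eq length_Cons nth_Cons_0 nth_Cons_Suc zero_less_Suc
        not0_implies_Suc)
  with 3 show ?case by auto
qed auto

lemma fib_val_replicate_0 [simp]: "fib_val (replicate n 0) = 0"
  by (induction n) auto

lemma fib_val_append: "fib_val (b @ t) = fib_val (b @ replicate (length t) 0) + fib_val t"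
  by (induction b) auto

lemma fib_val_eq_sum: "fib_val l = (\<Sum>k<length l. l ! k * zF (length l - k))"
  by (induction l) (simp_all add: sum.lessThan_Suc_shift del: sum.lessThan_Suc)

lemma is_zeck_iff: "is_zeck m l \<longleftrightarrow> fib_admissible l \<and> l \<noteq> [] \<and> hd l = 1 \<and> m = fib_val l"
  unfolding is_zeck_def fib_admissible_iff fib_val_eq_sum by blast

lemma valF_eq_fib_val: "length b = s \<Longrightarrow> valF s b = fib_val b"
  unfolding valF_def fib_val_eq_sum by simp

lemma fib_val_less: "fib_admissible t \<Longrightarrow> fib_val t < zF (Suc (length t))"
proof (induction t rule: induct_list012)
  case (3 d e l)
  show ?case
  proof (cases "d = 0")
    case True
    with 3 show ?thesis using zF_le_Suc[of "Suc (Suc (length l))"] by auto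
  next
    case False
    with 3 have "d = 1" "e = 0" "fib_val l < zF (Suc (length l))"
      by (auto simp: fib_admissible_Cons)
    then show ?thesis by simp
  qed
qed auto

lemma zF_length_le_fib_val: "t \<noteq> [] \<Longrightarrow> hd t = 1 \<Longrightarrow> zF (length t) \<le> fib_val t"
  by (cases t) auto

lemma fib_val_surj: "r < zF (Suc n) \<Longrightarrow> \<exists>t. fib_admissible t \<and> length t = n \<and> fib_val t = r"
proof (induction n arbitrary: r rule: less_induct)
  case (less n)
  consider "n = 0" | n' where "n = Suc n'" "r < zF n" | "n = 1" "zF n \<le> r"
    | n' where "n = Suc (Suc n')" "zF n \<le> r"
    by (metis One_nat_def not0_implies_Suc not_less)
  then show ?case
  proof cases
    case 1
    with less show ?thesis by (intro exI[of _ "[]"]) auto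
  next
    case (2 n')
    with less obtain t where "fib_admissible t" "length t = n'" "fib_val t = r" by auto
    with 2 show ?thesis by (intro exI[of _ "0 # t"]) (auto simp: fib_admissible_Cons)
  next
    case 3
    with less have "r = 1" by simp
    with 3 show ?thesis by (intro exI[of _ "[1]"]) auto
  next
    case (4 n')
    with less.prems have "r - zF n < zF (Suc n')" by simp
    with 4 less.IH obtain t where "fib_admissible t" "length t = n'" "fib_val t = r - zF n"
      by (metis less_add_Suc2 plus_1_eq_Suc)
    with 4 show ?thesis by (intro exI[of _ "1 # 0 # t"]) (auto simp: fib_admissible_Cons)
  qed
qed

lemma fib_val_inj:
  "fib_admissible t \<Longrightarrow> fib_admissible t' \<Longrightarrow> length t = length t' \<Longrightarrow>
     fib_val t = fib_val t' \<Longrightarrow> t = t'"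
proof (induction t arbitrary: t')
  case (Cons d l)
  then obtain d' l' where t': "t' = d' # l'" by (cases t') auto
  with Cons.prems have adm: "fib_admissible l" "fib_admissible l'" "d \<le> 1" "d' \<le> 1"
    and len: "length l = length l'"
    by (auto simp: fib_admissible_Cons)
  have "d = d'"
  proof (rule ccontr)
    assume "d \<noteq> d'"
    with adm have "d = 1 \<and> d' = 0 \<or> d = 0 \<and> d' = 1" by auto
    with fib_val_less[OF adm(1)] fib_val_less[OF adm(2)] Cons.prems(4) t' len show False
      by auto
  qed
  with Cons.IH[OF adm(1,2) len] Cons.prems(4) t' len show ?case by simp
qed auto

lemma fib_val_tail_iff:
  assumes "d \<le> 1"
  shows "r < zF (Suc n - d) \<longleftrightarrow> (\<exists>t. fib_admissible (d # t) \<and> length t = n \<and> fib_val t = r)"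
proof (cases "d = 0")
  case True
  then show ?thesis
    using fib_val_surj fib_val_less by (auto simp: fib_admissible_Cons)
next
  case False
  with assms have d: "d = 1" by simp
  show ?thesis
  proof (cases n)
    case 0
    with d show ?thesis by auto
  next
    case (Suc n')
    have "r < zF n \<longleftrightarrow> (\<exists>t'. fib_admissible t' \<and> length t' = n' \<and> fib_val t' = r)"
      using fib_val_surj fib_val_less Suc by auto
    also have "\<dots> \<longleftrightarrow> (\<exists>t. fib_admissible (d # t) \<and> length t = n \<and> fib_val t = r)"
    proof
      assume "\<exists>t'. fib_admissible t' \<and> length t' = n' \<and> fib_val t' = r"
      then obtain t' where "fib_admissible t'" "length t' = n'" "fib_val t' = r" by blast
      with d Suc show "\<exists>t. fib_admissible (d # t) \<and> length t = n \<and> fib_val t = r"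
        by (intro exI[of _ "0 # t'"]) (auto simp: fib_admissible_Cons)
    next
      assume "\<exists>t. fib_admissible (d # t) \<and> length t = n \<and> fib_val t = r"
      then obtain t where "fib_admissible (d # t)" "length t = n" "fib_val t = r" by blast
      with d Suc show "\<exists>t'. fib_admissible t' \<and> length t' = n' \<and> fib_val t' = r"
        by (cases t) (auto simp: fib_admissible_Cons)
    qed
    finally show ?thesis using d Suc by simp
  qed
qed

lemma is_zeck_bounds:
  "is_zeck m l \<Longrightarrow> zF (length l) \<le> m \<and> m < zF (Suc (length l))"
  unfolding is_zeck_iff using zF_length_le_fib_val fib_val_less by blast

lemma is_zeck_unique:
  assumes "is_zeck m l" "is_zeck m l'"
  shows "l = l'"
proof -
  have "length l = length l'"
  proof (rule ccontr)
    assume "length l \<noteq> length l'"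
    then consider "Suc (length l) \<le> length l'" | "Suc (length l') \<le> length l" by linarith
    then show False
      using is_zeck_bounds[OF assms(1)] is_zeck_bounds[OF assms(2)]
      by cases (use zF_mono in fastforce)+
  qed
  with assms show ?thesis using fib_val_inj unfolding is_zeck_iff by metis
qed

lemma is_zeck_exists:
  assumes "0 < m"
  shows "\<exists>l. is_zeck m l"
proof -
  define n where "n = (LEAST n. m < zF (Suc n))"
  have n: "m < zF (Suc n)"
    unfolding n_def by (rule LeastI[of _ m]) (use self_le_zF[of "Suc m"] in simp)
  have least: "\<not> m < zF (Suc k)" if "k < n" for k
    using not_less_Least that unfolding n_def .
  from n obtain t where t: "fib_admissible t" "length t = n" "fib_val t = m"
    using fib_val_surj by blast
  with assms obtain d l where dl: "t = d # l"
    by (cases t) auto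
  have "d \<noteq> 0"
  proof
    assume "d = 0"
    with t dl have "m < zF (Suc (length l))"
      using fib_val_less[of l] by (simp add: fib_admissible_Cons)
    moreover have "length l < n"
      using t dl by simp
    ultimately show False
      using least by blast
  qed
  with t dl have "is_zeck m t"
    unfolding is_zeck_iff by (simp add: fib_admissible_Cons)
  then show ?thesis ..
qed

lemma is_zeck_zeck: "0 < m \<Longrightarrow> is_zeck m (zeck m)"
  unfolding zeck_def using is_zeck_exists is_zeck_unique by (metis theI)

lemma zeck_eqI: "is_zeck m l \<Longrightarrow> zeck m = l"
  using is_zeck_zeck is_zeck_unique is_zeck_bounds
  by (metis gr0I le_zero_eq zF_neq_0)

lemma zF_length_zeck: "0 < m \<Longrightarrow> zF (length (zeck m)) \<le> m \<and> m < zF (Suc (length (zeck m)))"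
  using is_zeck_bounds is_zeck_zeck by blast

lemma FS_D:
  assumes "b \<in> FS s" "1 \<le> s"
  shows "fib_admissible b \<and> b \<noteq> [] \<and> hd b = 1 \<and> length b = s"
proof -
  from assms obtain m where "LB s m = Some b"
    unfolding FS_def by auto
  then have m: "0 < m" "s \<le> length (zeck m)" "b = take s (zeck m)"
    unfolding LB_def by (auto split: if_splits)
  then have "is_zeck m (b @ drop s (zeck m))"
    using is_zeck_zeck by simp
  moreover have "length b = s" "b \<noteq> []"
    using m assms(2) by auto
  ultimately show ?thesis
    unfolding is_zeck_iff fib_admissible_append by simp
qed

lemma LB_fib_val:
  assumes "fib_admissible b" "b \<noteq> []" "hd b = 1"
  shows "LB (length b) (fib_val b) = Some b"
proof -
  from assms have "is_zeck (fib_val b) b"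
    unfolding is_zeck_iff by simp
  with assms show ?thesis
    unfolding LB_def using zeck_eqI is_zeck_bounds[of "fib_val b" b]
    by (metis gr0I le_zero_eq order_refl take_all zF_neq_0)
qed

lemma FS_I: "fib_admissible b \<Longrightarrow> b \<noteq> [] \<Longrightarrow> hd b = 1 \<Longrightarrow> b \<in> FS (length b)"
  unfolding FS_def using LB_fib_val by blast

text \<open>\<open>zF (Suc (L - s) - last b)\<close> counts the admissible tails of length \<open>L - s\<close> that may follow
  the last digit of \<open>b\<close>.\<close>

lemma LB_eq_Some_iff:
  assumes b: "fib_admissible b" "b \<noteq> []" "hd b = 1" "length b = s"
    and m: "0 < m" "s \<le> length (zeck m)"
  defines "L \<equiv> length (zeck m)"
  shows "LB s m = Some b \<longleftrightarrow>
    fib_val (b @ replicate (L - s) 0) \<le> m \<and>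
    m < fib_val (b @ replicate (L - s) 0) + zF (Suc (L - s) - last b)"
    (is "_ \<longleftrightarrow> ?A \<le> m \<and> m < ?A + ?T")
proof -
  have last_b: "last b \<le> 1"
    using b fib_admissible_digit_le_1 by simp
  have tail: "fib_admissible (b @ t) \<longleftrightarrow> fib_admissible (last b # t)" for t
    using b last_b by (simp add: fib_admissible_append fib_admissible_Cons)
  show ?thesis
  proof
    assume "LB s m = Some b"
    then have "zeck m = b @ drop s (zeck m)"
      unfolding LB_def by (metis append_take_drop_id option.distinct(1) option.inject)
    then have "is_zeck m (b @ drop s (zeck m))"
      using is_zeck_zeck m by metis
    then have "fib_admissible (last b # drop s (zeck m))"
      and "m = ?A + fib_val (drop s (zeck m))"
      using tail fib_val_append[of b "drop s (zeck m)"] unfolding is_zeck_iff L_def by auto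
    moreover have "fib_val (drop s (zeck m)) < ?T"
      using fib_val_tail_iff[OF last_b] calculation(1) unfolding L_def by auto
    ultimately show "?A \<le> m \<and> m < ?A + ?T" by simp
  next
    assume "?A \<le> m \<and> m < ?A + ?T"
    then obtain t where t: "fib_admissible (last b # t)" "length t = L - s" "fib_val t = m - ?A"
      using fib_val_tail_iff[OF last_b, of "m - ?A" "L - s"] by auto
    with b \<open>?A \<le> m \<and> m < ?A + ?T\<close> have "is_zeck m (b @ t)"
      unfolding is_zeck_iff using tail fib_val_append[of b t] by auto
    then have "zeck m = b @ t" by (rule zeck_eqI)
    with b m show "LB s m = Some b"
      unfolding LB_def by simp
  qed
qed

section \<open>The golden ratio and the weights \<open>dotw\<close>\<close>

lemma phi_sq: "phi * phi = phi + 1"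
  unfolding phi_def by (simp add: field_simps)

lemma phi_gt_1: "1 < phi"
proof -
  have "1 < sqrt (5::real)" by simp
  then show ?thesis unfolding phi_def by simp
qed

lemma omega_pos: "0 < omega"
  unfolding omega_def using phi_gt_1 by simp

lemma omega_phi: "omega * phi = 1"
  unfolding omega_def using phi_gt_1 by simp

lemma omega_eq: "omega = phi - 1"
  unfolding omega_def using phi_sq phi_gt_1 by (simp add: field_simps)

lemma one_plus_omega: "1 + omega = phi"
  using omega_eq by simp

lemma omega_power_eq: "omega ^ n = omega ^ Suc n + omega ^ Suc (Suc n)"
proof -
  have "omega + omega * omega = 1"
    unfolding omega_eq using phi_sq by (simp add: algebra_simps)
  moreover have "omega ^ Suc n + omega ^ Suc (Suc n) = omega ^ n * (omega + omega * omega)"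
    by (simp add: algebra_simps)
  ultimately show ?thesis by simp
qed

lemma omega_less_1: "omega < 1"
  unfolding omega_def using phi_gt_1 by simp

lemma phi_plus_omega: "phi + omega = sqrt 5"
  unfolding omega_eq phi_def by (simp add: field_simps)

lemma dotw_Nil [simp]: "dotw [] = 0"
  unfolding dotw_def by simp

lemma dotw_Cons [simp]: "dotw (d # l) = real d + omega * dotw l"
  unfolding dotw_def
  by (simp add: sum.lessThan_Suc_shift sum_distrib_left algebra_simps del: sum.lessThan_Suc)

lemma dotw_replicate_0 [simp]: "dotw (replicate n 0) = 0"
  by (induction n) simp_all

lemma dotw_append_replicate_0 [simp]: "dotw (b @ replicate n 0) = dotw b"
  by (induction b) simp_all

lemma dotw_nonneg: "0 \<le> dotw l"
  by (induction l) (simp_all add: less_imp_le[OF omega_pos])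

lemma one_le_dotw: "l \<noteq> [] \<Longrightarrow> hd l = 1 \<Longrightarrow> 1 \<le> dotw l"
  by (cases l) (simp_all add: dotw_nonneg less_imp_le[OF omega_pos])

lemma dotw_less_phi: "fib_admissible l \<Longrightarrow> dotw l < phi"
proof (induction l rule: induct_list012)
  case (3 d e l)
  have "dotw l < phi" "dotw (e # l) < phi"
    using 3 by (simp_all add: fib_admissible_Cons)
  then have "omega * dotw l < 1" "omega * dotw (e # l) < 1"
    using omega_pos omega_phi by (metis mult_strict_left_mono)+
  have "d = 0 \<or> d = 1 \<and> e = 0"
    using "3.prems" by auto
  then show ?case
  proof
    assume "d = 0"
    with \<open>omega * dotw (e # l) < 1\<close> show ?thesis
      using phi_gt_1 by simp
  next
    assume "d = 1 \<and> e = 0"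
    then have "dotw (d # e # l) = 1 + omega * (omega * dotw l)"
      by simp
    moreover have "omega * (omega * dotw l) < omega"
      using mult_strict_left_mono[OF \<open>omega * dotw l < 1\<close> omega_pos] by simp
    ultimately show ?thesis
      using one_plus_omega by linarith
  qed
qed (use phi_gt_1 in auto)

lemma dotw_eq_0_if_fib_val_eq_0: "fib_val l = 0 \<Longrightarrow> dotw l = 0"
  by (induction l) auto

section \<open>Incrementing a digit string\<close>

text \<open>The exponent is \<open>length b - 1\<close> or \<open>length b\<close> according as \<open>b\<close> ends in \<open>0\<close> or \<open>1\<close>; in the
  second case the digit following \<open>b\<close> is forced to be \<open>0\<close>.\<close>

definition block_gap :: "nat list \<Rightarrow> real" where
  "block_gap b = omega ^ (length b + last b - 1)"

text \<open>Both predicates pair the integer increment with its effect on weights, so that the two are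
  proved together by one induction over the digit string.\<close>

definition is_fib_max :: "nat list \<Rightarrow> bool" where
  "is_fib_max b \<longleftrightarrow> fib_val b + 1 = zF (Suc (length b)) \<and> dotw b + block_gap b = phi"

definition is_fib_succ :: "nat list \<Rightarrow> nat list \<Rightarrow> bool" where
  "is_fib_succ b c \<longleftrightarrow> fib_admissible c \<and> length c = length b \<and>
     fib_val c = fib_val b + 1 \<and> dotw c = dotw b + block_gap b"

lemma block_gap_pos: "0 < block_gap b"
  unfolding block_gap_def using omega_pos by simp

lemma block_gap_Cons: "l \<noteq> [] \<Longrightarrow> block_gap (d # l) = omega * block_gap l"
  unfolding block_gap_def by (cases l) auto

lemma is_fib_succ_Cons_0: "l \<noteq> [] \<Longrightarrow> is_fib_succ l c \<Longrightarrow> is_fib_succ (0 # l) (0 # c)"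
  unfolding is_fib_succ_def
  by (cases c) (auto simp: block_gap_Cons fib_admissible_Cons algebra_simps)

lemma is_fib_succ_Cons_1:
  "l \<noteq> [] \<Longrightarrow> is_fib_succ l c \<Longrightarrow> hd c = 0 \<Longrightarrow> is_fib_succ (1 # l) (1 # c)"
  unfolding is_fib_succ_def
  by (cases c) (auto simp: block_gap_Cons fib_admissible_Cons algebra_simps)

lemma is_fib_max_Cons_0:
  assumes "l \<noteq> []" "is_fib_max l"
  shows "is_fib_succ (0 # l) (1 # replicate (length l) 0)"
proof -
  have "dotw (0 # l) + block_gap (0 # l) = omega * (dotw l + block_gap l)"
    using assms by (simp add: block_gap_Cons algebra_simps)
  also have "\<dots> = omega * phi"
    using assms unfolding is_fib_max_def by simp
  finally have "dotw (0 # l) + block_gap (0 # l) = omega * phi" .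
  then show ?thesis
    using assms omega_phi fib_admissible_replicate_0[of "length l"]
    by (simp add: is_fib_succ_def is_fib_max_def fib_admissible_Cons)
qed

lemma not_is_fib_max_tl:
  assumes "fib_admissible (1 # l)" "l \<noteq> []"
  shows "\<not> is_fib_max l"
proof -
  from assms obtain l' where l: "l = 0 # l'" "fib_admissible l'"
    by (cases l) (auto simp: fib_admissible_Cons)
  then have "fib_val l + 1 \<le> zF (length l)"
    using fib_val_less[of l'] by simp
  moreover have "zF (length l) < zF (Suc (length l))"
    using l zF_pos by simp
  ultimately show ?thesis
    unfolding is_fib_max_def by simp
qed

lemma is_fib_max_Cons_1:
  assumes "fib_admissible (1 # l)" "l \<noteq> []" "is_fib_succ l c" "hd c = 1"
  shows "is_fib_max (1 # l)"
proof -
  from assms obtain l' where l: "l = 0 # l'" "fib_admissible l'"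
    by (cases l) (auto simp: fib_admissible_Cons)
  from assms obtain r where c: "c = 1 # r" "length r = length l'"
    using l unfolding is_fib_succ_def by (cases c) auto
  have "fib_val l' < zF (length l)"
    using fib_val_less[OF l(2)] l by simp
  with assms(3) c l have "fib_val r = 0" "fib_val l' + 1 = zF (length l)"
    unfolding is_fib_succ_def by auto
  then have "dotw c = 1"
    using c dotw_eq_0_if_fib_val_eq_0 by simp
  have "dotw (1 # l) + block_gap (1 # l) = 1 + omega * (dotw l + block_gap l)"
    using assms(2) by (simp add: block_gap_Cons algebra_simps)
  also have "dotw l + block_gap l = 1"
    using assms(3) \<open>dotw c = 1\<close> unfolding is_fib_succ_def by simp
  finally show ?thesis
    using \<open>fib_val l' + 1 = zF (length l)\<close> l one_plus_omega unfolding is_fib_max_def by simp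
qed

lemma is_fib_max_or_succ:
  "fib_admissible b \<Longrightarrow> b \<noteq> [] \<Longrightarrow> is_fib_max b \<or> (\<exists>c. is_fib_succ b c)"
proof (induction b)
  case (Cons d l)
  then have d: "d = 0 \<or> d = 1" and adm_l: "fib_admissible l"
    by (auto simp: fib_admissible_Cons)
  show ?case
  proof (cases "l = []")
    case True
    with d show ?thesis
      using one_plus_omega
      by (auto simp: is_fib_max_def is_fib_succ_def block_gap_def intro!: exI[of _ "[1]"])
  next
    case False
    with Cons.IH adm_l consider "is_fib_max l" | c where "is_fib_succ l c"
      by blast
    then show ?thesis
    proof cases
      case 1
      with d False Cons.prems show ?thesis
        using is_fib_max_Cons_0 not_is_fib_max_tl by blast
    next
      case (2 c)
      have "hd c \<le> 1"
        using 2 False fib_admissible_digit_le_1[of c "hd c"]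
        unfolding is_fib_succ_def by (cases c) auto
      with d 2 False Cons.prems show ?thesis
        using is_fib_succ_Cons_0 is_fib_succ_Cons_1 is_fib_max_Cons_1
        by (metis le_neq_implies_less less_one)
    qed
  qed
qed simp

lemma last_block_Suc_Suc: "2 \<le> s \<Longrightarrow> last_block (Suc (Suc s)) = 1 # 0 # last_block s"
proof -
  assume s: "2 \<le> s"
  have "[1..<Suc (Suc s) + 1] = 1 # 2 # map (Suc \<circ> Suc) [1..<s + 1]"
    by (simp del: upt_Suc add: upt_conv_Cons map_Suc_upt flip: map_map)
  then show ?thesis
    using s unfolding last_block_def by auto
qed

lemma dotw_last_block: "2 \<le> s \<Longrightarrow> dotw (last_block s) = phi"
proof (induction s rule: less_induct)
  case (less s)
  consider "s = 2" | "s = 3" | "4 \<le> s"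
    using less.prems by linarith
  then show ?case
  proof cases
    case 1
    then show ?thesis
      using one_plus_omega by (simp add: last_block_def numeral_2_eq_2)
  next
    case 2
    then show ?thesis
      using one_plus_omega by (simp add: last_block_def numeral_3_eq_3)
  next
    case 3
    define s' where "s' = s - 2"
    have "s = Suc (Suc s')" "2 \<le> s'"
      using 3 unfolding s'_def by simp_all
    then have "dotw (last_block s) = 1 + omega * (omega * phi)"
      using less.IH[of s'] by (simp add: last_block_Suc_Suc)
    then show ?thesis
      using omega_phi one_plus_omega by simp
  qed
qed

lemma hd_eq_1_if_zF_le_fib_val:
  assumes "fib_admissible c" "c \<noteq> []" "zF (length c) \<le> fib_val c"
  shows "hd c = 1"
proof (rule ccontr)
  assume "hd c \<noteq> 1"
  with assms obtain r where "c = 0 # r" "fib_admissible r"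
    by (cases c) (auto simp: fib_admissible_Cons)
  with assms(3) fib_val_less[of r] show False
    by simp
qed

lemma dotw_btilde:
  assumes "b \<in> FS s" "2 \<le> s"
  shows "dotw (btilde s b) = dotw b + block_gap b \<and> dotw b + block_gap b \<le> phi"
proof -
  have b: "fib_admissible b" "b \<noteq> []" "hd b = 1" "length b = s"
    using FS_D assms by auto
  have FS_val: "fib_admissible c \<and> length c = s \<and> valF s c = fib_val c" if "c \<in> FS s" for c
  proof -
    have "fib_admissible c" "length c = s"
      using FS_D[of c s] that assms(2) by auto
    then show ?thesis
      using valF_eq_fib_val[of c s] by simp
  qed
  from is_fib_max_or_succ[OF b(1,2)] consider "is_fib_max b" | c where "is_fib_succ b c"
    by blast
  then show ?thesis
  proof cases
    case 1
    have "\<not> (\<exists>c\<in>FS s. valF s c = valF s b + 1)"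
      using 1 FS_val fib_val_less b(4) valF_eq_fib_val unfolding is_fib_max_def by fastforce
    then have "btilde s b = last_block s"
      unfolding btilde_def by simp
    with 1 show ?thesis
      using dotw_last_block assms(2) unfolding is_fib_max_def by simp
  next
    case (2 c)
    then have c: "fib_admissible c" "length c = s" "fib_val c = fib_val b + 1"
      and dotw_c: "dotw c = dotw b + block_gap b"
      using b unfolding is_fib_succ_def by auto
    have "hd c = 1"
      using c b assms(2) zF_length_le_fib_val[of b] hd_eq_1_if_zF_le_fib_val[of c] by fastforce
    with c assms(2) have c_FS: "c \<in> FS s"
      using FS_I by fastforce
    have c_valF: "valF s c = valF s b + 1"
      using c b valF_eq_fib_val[of c s] valF_eq_fib_val[of b s] by simp
    have unique: "c' = c" if "c' \<in> FS s" "valF s c' = valF s b + 1" for c'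
      using FS_val[OF that(1)] that(2) c b valF_eq_fib_val[of b s] fib_val_inj by simp
    have "(THE c'. c' \<in> FS s \<and> valF s c' = valF s b + 1) = c"
      by (rule the_equality) (use c_FS c_valF unique in blast)+
    moreover have "\<exists>c'\<in>FS s. valF s c' = valF s b + 1"
      using c_FS c_valF by blast
    ultimately have "btilde s b = c"
      unfolding btilde_def by (simp only: if_True)
    with dotw_c show ?thesis
      using dotw_less_phi[OF c(1)] by simp
  qed
qed

section \<open>Binet's formula and the approximation of values by weights\<close>

lemma power_Suc_Suc_if_sq: "(x::real) * x = x + 1 \<Longrightarrow> x ^ Suc (Suc n) = x ^ Suc n + x ^ n"
proof -
  assume "x * x = x + 1"
  then have "x ^ n * (x * x) = x ^ n * (x + 1)" by simp
  then show ?thesis by (simp add: algebra_simps)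
qed

lemma binet: "sqrt 5 * real (zF n) = phi ^ Suc n - (- omega) ^ Suc n"
proof (induction n rule: zF.induct)
  case 1
  show ?case using phi_plus_omega by simp
next
  case 2
  have "phi - omega = 1" "phi + omega = sqrt 5"
    using one_plus_omega phi_plus_omega by simp_all
  moreover have "phi ^ 2 - omega ^ 2 = (phi - omega) * (phi + omega)"
    by (simp add: power2_eq_square algebra_simps)
  ultimately have "phi ^ 2 - omega ^ 2 = sqrt 5"
    by simp
  then show ?case by (simp add: numeral_2_eq_2)
next
  case (3 n)
  have psi_sq: "- omega * - omega = - omega + 1"
    using omega_power_eq[of 0] by simp
  have "sqrt 5 * real (zF (Suc (Suc n))) = sqrt 5 * real (zF (Suc n)) + sqrt 5 * real (zF n)"
    by (simp add: algebra_simps)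
  also have "\<dots> = phi ^ Suc (Suc (Suc n)) - (- omega) ^ Suc (Suc (Suc n))"
    using 3 power_Suc_Suc_if_sq[OF phi_sq, of "Suc n"] power_Suc_Suc_if_sq[OF psi_sq, of "Suc n"]
    by linarith
  finally show ?case .
qed

lemma abs_sqrt5_zF_sub_phi_power: "\<bar>sqrt 5 * real (zF n) - phi ^ Suc n\<bar> \<le> 1"
proof -
  have "\<bar>(- omega) ^ Suc n\<bar> = omega ^ Suc n"
    using omega_pos by (simp add: power_abs abs_mult)
  also have "\<dots> \<le> 1"
    using omega_pos omega_less_1 by (intro power_le_one) auto
  finally have "\<bar>(- omega) ^ Suc n\<bar> \<le> 1" .
  then show ?thesis
    using binet[of n] by simp
qed

lemma phi_power_add_mult_omega_power: "phi ^ (m + n) * omega ^ n = phi ^ m"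
proof -
  have "phi ^ (m + n) * omega ^ n = phi ^ m * (phi * omega) ^ n"
    by (simp add: power_add power_mult_distrib mult.assoc)
  then show ?thesis
    using omega_phi by (simp add: mult.commute)
qed

lemma abs_sqrt5_fib_val_sub_dotw:
  "fib_admissible l \<Longrightarrow>
     \<bar>sqrt 5 * real (fib_val l) - phi ^ Suc (length l) * dotw l\<bar> \<le> 1 - omega ^ length l"
proof (induction l)
  case (Cons d l)
  define err where "err l' = sqrt 5 * real (fib_val l') - phi ^ Suc (length l') * dotw l'" for l'
  have d: "d \<le> 1" and "\<bar>err l\<bar> \<le> 1 - omega ^ length l"
    using Cons unfolding err_def by (auto simp: fib_admissible_Cons)
  have shift: "phi ^ Suc (Suc (length l)) * (omega * dotw l) = phi ^ Suc (length l) * dotw l"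
    using phi_power_add_mult_omega_power[of "Suc (length l)" 1]
    by (metis Suc_eq_plus1 power_one_right mult.assoc)
  have "err (d # l) = real d * (sqrt 5 * real (zF (Suc (length l))) - phi ^ Suc (Suc (length l)))
      + (sqrt 5 * real (fib_val l) - phi ^ Suc (Suc (length l)) * (omega * dotw l))"
    unfolding err_def by (simp add: algebra_simps)
  also have "\<dots> = - real d * (- omega) ^ Suc (Suc (length l)) + err l"
    unfolding shift binet err_def by simp
  finally have "err (d # l) = - real d * (- omega) ^ Suc (Suc (length l)) + err l" .
  moreover have "\<bar>real d * (- omega) ^ Suc (Suc (length l))\<bar> = real d * omega ^ Suc (Suc (length l))"
    using omega_pos by (simp add: abs_mult power_abs)
  ultimately have "\<bar>err (d # l)\<bar> \<le> real d * omega ^ Suc (Suc (length l)) + (1 - omega ^ length l)"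
    using \<open>\<bar>err l\<bar> \<le> 1 - omega ^ length l\<close> by linarith
  also have "\<dots> \<le> 1 - omega ^ Suc (length l)"
  proof -
    have "real d * omega ^ Suc (Suc (length l)) \<le> omega ^ Suc (Suc (length l))"
      using d omega_pos by (intro mult_left_le_one_le) auto
    then show ?thesis
      using omega_power_eq[of "length l"] by linarith
  qed
  finally show ?case
    unfolding err_def by simp
qed simp

lemma abs_sqrt5_block_count_sub_block_gap:
  assumes "b \<noteq> []" "length b = s" "last b \<le> 1" "s \<le> L"
  shows "\<bar>sqrt 5 * real (zF (Suc (L - s) - last b)) - phi ^ Suc L * block_gap b\<bar> \<le> 1"
proof -
  have "Suc L = Suc (Suc (L - s) - last b) + (s + last b - 1)"
    using assms by (cases s) auto
  then have "phi ^ Suc L * block_gap b = phi ^ Suc (Suc (L - s) - last b)"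
    unfolding block_gap_def assms(2) by (simp only: phi_power_add_mult_omega_power)
  show ?thesis
    unfolding \<open>phi ^ Suc L * block_gap b = _\<close> by (rule abs_sqrt5_zF_sub_phi_power)
qed

section \<open>The interpolating function \<open>frakF\<close>\<close>

lemma frakF_eq: "frakF x = (phi powr (x + 1) + cos (pi * x) / phi powr (x + 1)) / sqrt 5"
proof -
  have "phi * phi powr x = phi powr (x + 1)"
    using phi_gt_1 by (simp add: powr_add)
  moreover have "phi * (phi powr (- x) * phi powr (- 2)) = phi powr (1 + - x + - 2)"
    using phi_gt_1 by (simp only: powr_add powr_one)
  moreover have "phi powr (1 + - x + - 2) = 1 / phi powr (x + 1)"
    by (simp add: powr_minus_divide [symmetric] algebra_simps)
  ultimately show ?thesis
    unfolding frakF_def by (simp add: algebra_simps add_divide_distrib)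
qed

lemma frakF_of_nat: "frakF (real n) = real (zF n)"
proof -
  have "phi powr (real n + 1) = phi ^ Suc n"
    using phi_gt_1 powr_realpow[of phi "Suc n"] by (simp add: add.commute)
  moreover have "cos (pi * real n) / phi ^ Suc n = - ((- omega) ^ Suc n)"
    unfolding omega_def by (simp add: power_divide power_minus')
  ultimately show ?thesis
    unfolding frakF_eq using binet[of n] by (simp add: field_simps)
qed

text \<open>On \<open>[1, 2)\<close> the sine term is nonpositive; from \<open>2\<close> on the exponential term dominates.\<close>

lemma frakF_deriv_numerator_pos:
  assumes "1 \<le> x"
  shows "ln phi * cos (pi * x) + pi * sin (pi * x) < ln phi * (phi powr (x + 1))\<^sup>2"
proof -
  have ln_phi: "0 < ln phi" "ln phi \<le> phi - 1" "omega * omega \<le> ln phi"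
    using phi_gt_1 ln_le_minus_one[of phi] ln_le_minus_one[of omega] omega_pos omega_power_eq[of 0]
    by (simp_all add: omega_def ln_div)
  have cos_term: "ln phi * cos (pi * x) \<le> ln phi"
    using ln_phi by (intro mult_left_le) auto
  show ?thesis
  proof (cases "x < 2")
    case True
    have "pi * sin (pi * x) \<le> 0"
      using assms True by (intro mult_nonneg_nonpos sin_le_zero) auto
    moreover have "1 < phi powr (x + 1)"
      using assms phi_gt_1 by simp
    then have "ln phi * 1 < ln phi * (phi powr (x + 1))\<^sup>2"
      using ln_phi by (intro mult_strict_left_mono) (auto simp: power2_eq_square less_1_mult)
    ultimately show ?thesis
      using cos_term by linarith
  next
    case False
    have "phi ^ 3 = phi powr 3"
      using phi_gt_1 powr_realpow[of phi 3] by simp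
    also have "\<dots> \<le> phi powr (x + 1)"
      using False phi_gt_1 by (intro powr_mono) auto
    finally have "(phi ^ 3)\<^sup>2 \<le> (phi powr (x + 1))\<^sup>2"
      using phi_gt_1 by (intro power_mono) auto
    then have "omega * omega * phi ^ 6 \<le> ln phi * (phi powr (x + 1))\<^sup>2"
      using ln_phi omega_pos by (intro mult_mono) (auto simp flip: power_mult)
    moreover have "omega * omega * phi ^ 6 = phi * phi + 2 * phi + 1"
      using phi_power_add_mult_omega_power[of 4 2] phi_sq
      by (simp add: power2_eq_square power4_eq_xxxx algebra_simps)
    moreover have "pi * sin (pi * x) \<le> pi"
      by (intro mult_left_le) auto
    ultimately show ?thesis
      using cos_term ln_phi phi_sq phi_gt_1 pi_less_4 by linarith
  qed
qed

lemma frakF_has_real_derivative: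
  "(frakF has_real_derivative
     (ln phi * (phi powr (x + 1))\<^sup>2 - (ln phi * cos (pi * x) + pi * sin (pi * x)))
       / (sqrt 5 * phi powr (x + 1))) (at x)"
proof -
  have eq: "frakF = (\<lambda>x. (phi powr (x + 1) + cos (pi * x) / phi powr (x + 1)) / sqrt 5)"
    using frakF_eq by blast
  have "0 < phi powr (x + 1)"
    using phi_gt_1 by simp
  then show ?thesis
    unfolding eq using phi_gt_1
    by (auto intro!: derivative_eq_intros simp: field_simps power2_eq_square)
qed

lemma frakF_strict_mono:
  assumes "1 \<le> x" "x < y"
  shows "frakF x < frakF y"
proof (rule DERIV_pos_imp_increasing[OF assms(2)])
  fix t assume "x \<le> t"
  then show "\<exists>y. (frakF has_real_derivative y) (at t) \<and> 0 < y"
    using assms frakF_has_real_derivative frakF_deriv_numerator_pos[of t] phi_gt_1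
    by (intro exI conjI) (auto intro!: divide_pos_pos)
qed

lemma frakF_le_frakF_iff: "1 \<le> x \<Longrightarrow> 1 \<le> y \<Longrightarrow> frakF x \<le> frakF y \<longleftrightarrow> x \<le> y"
  using frakF_strict_mono by (metis leD leI order.order_iff_strict)

lemma frakF_frakF_inv:
  assumes "1 \<le> m"
  shows "1 \<le> frakF_inv (real m) \<and> frakF (frakF_inv (real m)) = real m"
proof -
  have "frakF 1 \<le> real m" "real m \<le> frakF (real m)"
    using assms frakF_of_nat[of 1] frakF_of_nat[of m] self_le_zF[of m] by simp_all
  then obtain x where x: "1 \<le> x" "frakF x = real m"
    using IVT[of frakF 1 "real m" "real m"] assms frakF_has_real_derivative DERIV_isCont
    by fastforce
  have "frakF_inv (real m) = x"
    unfolding frakF_inv_def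
  proof (rule the_equality)
    show "1 \<le> x \<and> frakF x = real m"
      using x by simp
    show "y = x" if "1 \<le> y \<and> frakF y = real m" for y
      using that x frakF_le_frakF_iff by (metis order_antisym order_refl)
  qed
  with x show ?thesis by simp
qed

lemma floor_frakF_inv: "0 < m \<Longrightarrow> \<lfloor>frakF_inv (real m)\<rfloor> = int (length (zeck m))"
proof -
  assume "0 < m"
  define x L where "x = frakF_inv (real m)" and "L = length (zeck m)"
  have x: "1 \<le> x" "frakF x = real m"
    using frakF_frakF_inv[of m] \<open>0 < m\<close> unfolding x_def by simp_all
  have L: "zF L \<le> m" "m < zF (Suc L)" "1 \<le> L"
    using zF_length_zeck[OF \<open>0 < m\<close>] is_zeck_zeck[OF \<open>0 < m\<close>]
    unfolding L_def is_zeck_iff by (auto simp: Suc_le_eq)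
  have "real L \<le> x"
    using L x frakF_le_frakF_iff[of "real L" x] frakF_of_nat[of L] by simp
  moreover have "x < real L + 1"
    using L x frakF_le_frakF_iff[of "real (Suc L)" x] frakF_of_nat[of "Suc L"] by auto
  ultimately show ?thesis
    unfolding x_def[symmetric] L_def[symmetric] by linarith
qed

lemma abs_sqrt5_sub_phi_powr_frac_frakF_inv:
  assumes "0 < m"
  shows "\<bar>sqrt 5 * real m - phi ^ Suc (length (zeck m)) * phi powr frac (frakF_inv (real m))\<bar> \<le> 1"
proof -
  define x where "x = frakF_inv (real m)"
  define P where "P = phi powr (x + 1)"
  have x: "1 \<le> x" "frakF x = real m"
    using frakF_frakF_inv[of m] assms unfolding x_def by simp_all
  have "x + 1 = real (Suc (length (zeck m))) + frac x"
    using floor_frakF_inv[OF assms] unfolding x_def frac_def by simp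
  then have "P = phi powr real (Suc (length (zeck m))) * phi powr frac x"
    unfolding P_def by (simp only: powr_add)
  then have "P = phi ^ Suc (length (zeck m)) * phi powr frac x"
    using phi_gt_1 by (simp only: powr_realpow)
  moreover have "sqrt 5 * real m = P + cos (pi * x) / P"
    using x(2) unfolding frakF_eq P_def by (simp add: field_simps)
  moreover have "1 \<le> P"
    unfolding P_def using x phi_gt_1 by (intro ge_one_powr_ge_zero) auto
  then have "\<bar>cos (pi * x) / P\<bar> \<le> 1"
    by (simp add: divide_le_eq_1 order_trans[OF abs_cos_le_one])
  ultimately show ?thesis
    unfolding x_def by simp
qed

section \<open>Densities from equidistribution\<close>

lemma equidistributed_frac_tendsto:
  assumes "equidistributed_frac x"
  shows "(\<lambda>n. real (card {k\<in>{1..n}. frac (x k) \<le> \<beta>}) / real n) \<longlonglongrightarrow> max 0 (min 1 \<beta>)"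
proof (cases "\<beta> < 0 \<or> 1 < \<beta>")
  case True
  then have "frac (x k) \<le> \<beta> \<longleftrightarrow> \<not> \<beta> < 0" for k
    using frac_ge_0[of "x k"] frac_lt_1[of "x k"] by linarith
  then have "{k\<in>{1..n}. frac (x k) \<le> \<beta>} = (if \<beta> < 0 then {} else {1..n})" for n
    by auto
  with True show ?thesis
    by (auto simp: LIMSEQ_const_iff intro: tendsto_eventually eventually_sequentiallyI[of 1])
next
  case False
  with assms show ?thesis
    unfolding equidistributed_frac_def by simp
qed

lemma card_le_card_add_if_eventually:
  assumes "\<forall>k\<ge>k0. P k \<longrightarrow> Q k"
  shows "card {k\<in>{1..n}. P k} \<le> card {k\<in>{1..n}. Q k} + k0"
proof -
  have "{k\<in>{1..n}. P k} \<subseteq> {k\<in>{1..n}. Q k} \<union> {..<k0}"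
    using assms by auto
  then have "card {k\<in>{1..n}. P k} \<le> card ({k\<in>{1..n}. Q k} \<union> {..<k0})"
    by (intro card_mono) auto
  also have "\<dots> \<le> card {k\<in>{1..n}. Q k} + k0"
    using card_Un_le[of "{k\<in>{1..n}. Q k}" "{..<k0}"] by simp
  finally show ?thesis .
qed

lemma equidistributed_frac_interval_tendsto:
  assumes "equidistributed_frac x" "a \<le> b"
  shows "(\<lambda>n. real (card {k\<in>{1..n}. a < frac (x k) \<and> frac (x k) \<le> b}) / real n)
           \<longlonglongrightarrow> max 0 (min 1 b) - max 0 (min 1 a)"
proof -
  have "{k\<in>{1..n}. a < frac (x k) \<and> frac (x k) \<le> b}
      = {k\<in>{1..n}. frac (x k) \<le> b} - {k\<in>{1..n}. frac (x k) \<le> a}" for n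
    using assms(2) by auto
  moreover have "{k\<in>{1..n}. frac (x k) \<le> a} \<subseteq> {k\<in>{1..n}. frac (x k) \<le> b}" for n
    using assms(2) by auto
  ultimately have "real (card {k\<in>{1..n}. a < frac (x k) \<and> frac (x k) \<le> b}) / real n
      = real (card {k\<in>{1..n}. frac (x k) \<le> b}) / real n
        - real (card {k\<in>{1..n}. frac (x k) \<le> a}) / real n" for n
    by (simp add: card_Diff_subset card_mono diff_divide_distrib)
  then show ?thesis
    using equidistributed_frac_tendsto[OF assms(1)] by (simp add: tendsto_diff)
qed

lemma eventually_density_less:
  assumes equi: "equidistributed_frac x" and "0 \<le> \<alpha>" "\<alpha> \<le> \<gamma>" "\<gamma> \<le> 1" "\<gamma> - \<alpha> < a"
    and upper: "\<And>\<epsilon>. 0 < \<epsilon> \<Longrightarrow>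
      \<forall>\<^sub>F k in sequentially. P k \<longrightarrow> \<alpha> - \<epsilon> \<le> frac (x k) \<and> frac (x k) \<le> \<gamma> + \<epsilon>"
  shows "\<forall>\<^sub>F n in sequentially. real (card {k\<in>{1..n}. P k}) / real n < a"
proof -
  define \<epsilon> where "\<epsilon> = (a - (\<gamma> - \<alpha>)) / 4"
  let ?I = "\<lambda>n. real (card {k\<in>{1..n}. \<alpha> - 2 * \<epsilon> < frac (x k) \<and> frac (x k) \<le> \<gamma> + \<epsilon>}) / real n"
  have "0 < \<epsilon>" "\<gamma> - \<alpha> + 4 * \<epsilon> = a"
    using assms(5) unfolding \<epsilon>_def by (simp_all add: field_simps)
  obtain k0 where "\<forall>k\<ge>k0. P k \<longrightarrow> \<alpha> - \<epsilon> \<le> frac (x k) \<and> frac (x k) \<le> \<gamma> + \<epsilon>"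
    using upper[OF \<open>0 < \<epsilon>\<close>] unfolding eventually_sequentially by blast
  then have k0: "\<forall>k\<ge>k0. P k \<longrightarrow> \<alpha> - 2 * \<epsilon> < frac (x k) \<and> frac (x k) \<le> \<gamma> + \<epsilon>"
    using \<open>0 < \<epsilon>\<close> by fastforce
  have "(\<lambda>n. ?I n + real k0 / real n)
      \<longlonglongrightarrow> max 0 (min 1 (\<gamma> + \<epsilon>)) - max 0 (min 1 (\<alpha> - 2 * \<epsilon>)) + 0"
    using \<open>0 < \<epsilon>\<close> assms(2-4)
    by (intro tendsto_add lim_const_over_n equidistributed_frac_interval_tendsto[OF equi]) simp
  moreover have "max 0 (min 1 (\<gamma> + \<epsilon>)) - max 0 (min 1 (\<alpha> - 2 * \<epsilon>)) + 0 < a"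
    using \<open>0 < \<epsilon>\<close> \<open>\<gamma> - \<alpha> + 4 * \<epsilon> = a\<close> assms(2-4) by (auto simp: max_def min_def)
  ultimately have "\<forall>\<^sub>F n in sequentially. ?I n + real k0 / real n < a"
    by (rule order_tendstoD)
  moreover have "real (card {k\<in>{1..n}. P k}) / real n \<le> ?I n + real k0 / real n" for n
    using card_le_card_add_if_eventually[OF k0, of n]
    by (simp add: add_divide_distrib [symmetric] divide_right_mono)
  ultimately show ?thesis
    by (elim eventually_mono) (rule le_less_trans)
qed

lemma eventually_density_greater:
  assumes equi: "equidistributed_frac x" and "0 \<le> \<alpha>" "\<gamma> \<le> 1" "a < \<gamma> - \<alpha>"
    and lower: "\<And>\<epsilon>. 0 < \<epsilon> \<Longrightarrow>
      \<forall>\<^sub>F k in sequentially. \<alpha> + \<epsilon> \<le> frac (x k) \<and> frac (x k) \<le> \<gamma> - \<epsilon> \<longrightarrow> P k"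
  shows "\<forall>\<^sub>F n in sequentially. a < real (card {k\<in>{1..n}. P k}) / real n"
proof (cases "a < 0")
  case True
  then show ?thesis
    by (intro always_eventually allI) (simp add: less_le_trans[OF True])
next
  case False
  define \<epsilon> where "\<epsilon> = ((\<gamma> - \<alpha>) - a) / 4"
  let ?I = "\<lambda>n. real (card {k\<in>{1..n}. \<alpha> + \<epsilon> < frac (x k) \<and> frac (x k) \<le> \<gamma> - \<epsilon>}) / real n"
  have "0 < \<epsilon>" "\<gamma> - \<alpha> - 4 * \<epsilon> = a" "\<alpha> + \<epsilon> \<le> \<gamma> - \<epsilon>"
    using assms(4) False unfolding \<epsilon>_def by (simp_all add: field_simps)
  obtain k0 where k0: "\<forall>k\<ge>k0. \<alpha> + \<epsilon> < frac (x k) \<and> frac (x k) \<le> \<gamma> - \<epsilon> \<longrightarrow> P k"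
    using lower[OF \<open>0 < \<epsilon>\<close>] unfolding eventually_sequentially by (meson less_imp_le)
  have "(\<lambda>n. ?I n - real k0 / real n)
      \<longlonglongrightarrow> max 0 (min 1 (\<gamma> - \<epsilon>)) - max 0 (min 1 (\<alpha> + \<epsilon>)) - 0"
    using \<open>\<alpha> + \<epsilon> \<le> \<gamma> - \<epsilon>\<close>
    by (intro tendsto_diff lim_const_over_n equidistributed_frac_interval_tendsto[OF equi])
  moreover have "a < max 0 (min 1 (\<gamma> - \<epsilon>)) - max 0 (min 1 (\<alpha> + \<epsilon>)) - 0"
    using \<open>0 < \<epsilon>\<close> \<open>\<gamma> - \<alpha> - 4 * \<epsilon> = a\<close> assms(2,3) by (auto simp: max_def min_def)
  ultimately have "\<forall>\<^sub>F n in sequentially. a < ?I n - real k0 / real n"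
    by (rule order_tendstoD)
  moreover have "?I n - real k0 / real n \<le> real (card {k\<in>{1..n}. P k}) / real n" for n
    using card_le_card_add_if_eventually[OF k0, of n]
    by (simp add: diff_divide_distrib [symmetric] divide_right_mono)
  ultimately show ?thesis
    by (elim eventually_mono) (rule less_le_trans)
qed

lemma density_eq_if_frac_window:
  assumes "equidistributed_frac x" "0 \<le> \<alpha>" "\<alpha> \<le> \<gamma>" "\<gamma> \<le> 1"
    and window: "\<And>\<epsilon>. 0 < \<epsilon> \<Longrightarrow> \<forall>\<^sub>F k in sequentially.
      (P k \<longrightarrow> \<alpha> - \<epsilon> \<le> frac (x k) \<and> frac (x k) \<le> \<gamma> + \<epsilon>) \<and>
      (\<alpha> + \<epsilon> \<le> frac (x k) \<and> frac (x k) \<le> \<gamma> - \<epsilon> \<longrightarrow> P k)"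
  shows "(\<lambda>n. real (card {k\<in>{1..n}. P k}) / real n) \<longlonglongrightarrow> \<gamma> - \<alpha>"
proof (rule order_tendstoI)
  fix a
  show "\<forall>\<^sub>F n in sequentially. real (card {k\<in>{1..n}. P k}) / real n < a" if "\<gamma> - \<alpha> < a"
  proof (rule eventually_density_less[OF assms(1-4) that])
    show "\<forall>\<^sub>F k in sequentially. P k \<longrightarrow> \<alpha> - \<epsilon> \<le> frac (x k) \<and> frac (x k) \<le> \<gamma> + \<epsilon>"
      if "0 < \<epsilon>" for \<epsilon>
      using window[OF that] by (rule eventually_mono) blast
  qed
  show "\<forall>\<^sub>F n in sequentially. a < real (card {k\<in>{1..n}. P k}) / real n" if "a < \<gamma> - \<alpha>"
  proof (rule eventually_density_greater[OF assms(1,2,4) that])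
    show "\<forall>\<^sub>F k in sequentially. \<alpha> + \<epsilon> \<le> frac (x k) \<and> frac (x k) \<le> \<gamma> - \<epsilon> \<longrightarrow> P k"
      if "0 < \<epsilon>" for \<epsilon>
      using window[OF that] by (rule eventually_mono) blast
  qed
qed

section \<open>Leading blocks and the fractional part of \<open>frakF_inv\<close>\<close>

lemma LB_eq_Some_approx:
  assumes b: "fib_admissible b" "b \<noteq> []" "hd b = 1" "length b = s"
    and m: "0 < m" "s \<le> length (zeck m)"
  defines "e \<equiv> 4 / phi ^ Suc (length (zeck m))"
    and "V \<equiv> phi powr frac (frakF_inv (real m))"
  shows "LB s m = Some b \<Longrightarrow> dotw b - e \<le> V \<and> V \<le> dotw b + block_gap b + e"
    and "dotw b + e \<le> V \<Longrightarrow> V \<le> dotw b + block_gap b - e \<Longrightarrow> LB s m = Some b"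
proof -
  define L where "L = length (zeck m)"
  define P where "P = phi ^ Suc L"
  define A where "A = fib_val (b @ replicate (L - s) 0)"
  define T where "T = zF (Suc (L - s) - last b)"
  have P: "0 < P" "e = 4 / P"
    unfolding P_def e_def L_def using phi_gt_1 by simp_all
  have "fib_admissible (b @ replicate (L - s) 0)" "length (b @ replicate (L - s) 0) = L"
    using b m(2) fib_admissible_replicate_0 unfolding L_def by (simp_all add: fib_admissible_append)
  then have "\<bar>sqrt 5 * real A - P * dotw b\<bar> \<le> 1 - omega ^ L"
    using abs_sqrt5_fib_val_sub_dotw unfolding A_def P_def by fastforce
  moreover have "0 \<le> omega ^ L"
    using omega_pos by simp
  ultimately have "\<bar>sqrt 5 * real A - P * dotw b\<bar> \<le> 1"
    by linarith
  moreover have "\<bar>sqrt 5 * real T - P * block_gap b\<bar> \<le> 1"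
    using abs_sqrt5_block_count_sub_block_gap[of b s L] b m(2) fib_admissible_digit_le_1[of b]
    unfolding T_def P_def L_def by simp
  moreover have "\<bar>sqrt 5 * real m - P * V\<bar> \<le> 1"
    using abs_sqrt5_sub_phi_powr_frac_frakF_inv[OF m(1)] unfolding P_def V_def L_def .
  moreover have "LB s m = Some b \<longleftrightarrow> real A \<le> real m \<and> real m < real A + real T"
    using LB_eq_Some_iff[OF b m] unfolding A_def T_def L_def by (simp flip: of_nat_add)
  moreover have "real A \<le> real m \<longleftrightarrow> sqrt 5 * real A \<le> sqrt 5 * real m"
    "real m < real A + real T \<longleftrightarrow> sqrt 5 * real m < sqrt 5 * real A + sqrt 5 * real T"
    by (simp_all flip: distrib_left)
  ultimately have approx:
    "LB s m = Some b \<Longrightarrow> P * dotw b - 4 \<le> P * V \<and> P * V \<le> P * dotw b + P * block_gap b + 4"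
    "P * dotw b + 4 \<le> P * V \<Longrightarrow> P * V + 4 \<le> P * dotw b + P * block_gap b \<Longrightarrow> LB s m = Some b"
    unfolding abs_le_iff by linarith+
  have "P * e = 4"
    using P by simp
  then have scaled: "P * x \<le> P * y + 4 \<longleftrightarrow> x \<le> y + e" "P * x + 4 \<le> P * y \<longleftrightarrow> x + e \<le> y" for x y
    using mult_le_cancel_left_pos[OF P(1)] by (metis distrib_left)+
  show "LB s m = Some b \<Longrightarrow> dotw b - e \<le> V \<and> V \<le> dotw b + block_gap b + e"
    using approx(1) scaled[of "dotw b" V] scaled[of V "dotw b + block_gap b"]
    by (simp add: algebra_simps)
  show "dotw b + e \<le> V \<Longrightarrow> V \<le> dotw b + block_gap b - e \<Longrightarrow> LB s m = Some b"
    using approx(2) scaled[of "dotw b" V] scaled[of V "dotw b + block_gap b"]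
    by (simp add: algebra_simps)
qed

lemma log_margin:
  fixes a c \<epsilon> :: real
  assumes "1 < a" "0 < c" "0 < \<epsilon>"
  obtains \<delta> where "0 < \<delta>"
    and "\<And>v. 0 < v \<Longrightarrow> c - \<delta> \<le> v \<Longrightarrow> log a c - \<epsilon> \<le> log a v"
    and "\<And>v. 0 < v \<Longrightarrow> v \<le> c + \<delta> \<Longrightarrow> log a v \<le> log a c + \<epsilon>"
    and "\<And>v. 0 < v \<Longrightarrow> log a c + \<epsilon> \<le> log a v \<Longrightarrow> c + \<delta> \<le> v"
    and "\<And>v. 0 < v \<Longrightarrow> log a v \<le> log a c - \<epsilon> \<Longrightarrow> v \<le> c - \<delta>"
proof -
  define q where "q = a powr \<epsilon>"
  have q: "1 < q"
    unfolding q_def using assms by simp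
  define \<delta> where "\<delta> = c * (1 - 1 / q)"
  have "q - 1 \<le> (q - 1) * q"
    using q by (simp add: mult_le_cancel_left1)
  then have "1 - 1 / q \<le> q - 1"
    using q by (simp add: field_simps)
  then have "c * (1 - 1 / q) \<le> c * (q - 1)"
    using assms(2) by (intro mult_left_mono) auto
  moreover have "c / q < c"
    using divide_strict_left_mono[OF q assms(2)] q by simp
  ultimately have \<delta>: "0 < \<delta>" "c - \<delta> \<ge> c / q" "c + \<delta> \<le> c * q"
    unfolding \<delta>_def right_diff_distrib by auto
  have powr_log: "a powr (log a c + t) = c * a powr t" "a powr log a v = v" if "0 < v" for v t
    using assms that by (simp_all add: powr_add)
  have log_le: "log a c + t \<le> log a v \<longleftrightarrow> c * a powr t \<le> v"
    and le_log: "log a v \<le> log a c + t \<longleftrightarrow> v \<le> c * a powr t" if "0 < v" for v t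
    using powr_le_cancel_iff[OF assms(1)] powr_log[OF that] by metis+
  show thesis
  proof (rule that[OF \<delta>(1)])
    fix v :: real assume "0 < v"
    show "c - \<delta> \<le> v \<Longrightarrow> log a c - \<epsilon> \<le> log a v"
      using log_le[OF \<open>0 < v\<close>, of "- \<epsilon>"] \<delta>(2) assms
      by (simp add: q_def powr_minus divide_inverse)
    show "v \<le> c + \<delta> \<Longrightarrow> log a v \<le> log a c + \<epsilon>"
      using le_log[OF \<open>0 < v\<close>, of \<epsilon>] \<delta>(3) unfolding q_def by simp
    show "log a c + \<epsilon> \<le> log a v \<Longrightarrow> c + \<delta> \<le> v"
      using log_le[OF \<open>0 < v\<close>, of \<epsilon>] \<delta>(3) unfolding q_def by simp
    show "log a v \<le> log a c - \<epsilon> \<Longrightarrow> v \<le> c - \<delta>"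
      using le_log[OF \<open>0 < v\<close>, of "- \<epsilon>"] \<delta>(2) assms
      by (simp add: q_def powr_minus divide_inverse)
  qed
qed

lemma log_interval_margin:
  fixes a c d \<epsilon> :: real
  assumes "1 < a" "0 < c" "0 < d" "0 < \<epsilon>"
  obtains \<delta> where "0 < \<delta>"
    and "\<And>v. 0 < v \<Longrightarrow> c - \<delta> \<le> v \<Longrightarrow> v \<le> d + \<delta> \<Longrightarrow>
      log a c - \<epsilon> \<le> log a v \<and> log a v \<le> log a d + \<epsilon>"
    and "\<And>v. 0 < v \<Longrightarrow> log a c + \<epsilon> \<le> log a v \<Longrightarrow> log a v \<le> log a d - \<epsilon> \<Longrightarrow>
      c + \<delta> \<le> v \<and> v \<le> d - \<delta>"
proof -
  obtain \<delta>1 where "0 < \<delta>1"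
    and c: "\<And>v. 0 < v \<Longrightarrow> c - \<delta>1 \<le> v \<Longrightarrow> log a c - \<epsilon> \<le> log a v"
      "\<And>v. 0 < v \<Longrightarrow> log a c + \<epsilon> \<le> log a v \<Longrightarrow> c + \<delta>1 \<le> v"
    using log_margin[OF assms(1,2,4)] by metis
  obtain \<delta>2 where "0 < \<delta>2"
    and d: "\<And>v. 0 < v \<Longrightarrow> v \<le> d + \<delta>2 \<Longrightarrow> log a v \<le> log a d + \<epsilon>"
      "\<And>v. 0 < v \<Longrightarrow> log a v \<le> log a d - \<epsilon> \<Longrightarrow> v \<le> d - \<delta>2"
    using log_margin[OF assms(1,3,4)] by metis
  show thesis
  proof (rule that[of "min \<delta>1 \<delta>2"])
    show "0 < min \<delta>1 \<delta>2"
      using \<open>0 < \<delta>1\<close> \<open>0 < \<delta>2\<close> by simp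
  next
    fix v :: real assume "0 < v"
    show "c - min \<delta>1 \<delta>2 \<le> v \<Longrightarrow> v \<le> d + min \<delta>1 \<delta>2 \<Longrightarrow>
      log a c - \<epsilon> \<le> log a v \<and> log a v \<le> log a d + \<epsilon>"
      using c(1)[OF \<open>0 < v\<close>] d(1)[OF \<open>0 < v\<close>] by linarith
    show "log a c + \<epsilon> \<le> log a v \<Longrightarrow> log a v \<le> log a d - \<epsilon> \<Longrightarrow>
      c + min \<delta>1 \<delta>2 \<le> v \<and> v \<le> d - min \<delta>1 \<delta>2"
      using c(2)[OF \<open>0 < v\<close>] d(2)[OF \<open>0 < v\<close>] by linarith
  qed
qed

lemma filterlim_length_zeck: "filterlim (\<lambda>m. length (zeck m)) at_top at_top"
  unfolding filterlim_at_top
proof (intro allI eventually_at_top_linorderI)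
  fix M m :: nat
  assume "zF M \<le> m"
  then have "0 < m" "zF M < zF (Suc (length (zeck m)))"
    using zF_pos[of M] zF_length_zeck[of m] by auto
  then show "M \<le> length (zeck m)"
    using zF_mono[of "Suc (length (zeck m))" M] by linarith
qed

lemma eventually_LB_iff_frac_frakF_inv:
  assumes b: "fib_admissible b" "b \<noteq> []" "hd b = 1" "length b = s" and "0 < \<epsilon>"
  defines "\<alpha> \<equiv> log phi (dotw b)" and "\<gamma> \<equiv> log phi (dotw b + block_gap b)"
  shows "\<forall>\<^sub>F m in at_top.
    (LB s m = Some b \<longrightarrow> \<alpha> - \<epsilon> \<le> frac (frakF_inv (real m)) \<and> frac (frakF_inv (real m)) \<le> \<gamma> + \<epsilon>) \<and>
    (\<alpha> + \<epsilon> \<le> frac (frakF_inv (real m)) \<and> frac (frakF_inv (real m)) \<le> \<gamma> - \<epsilon> \<longrightarrow> LB s m = Some b)"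
proof -
  define D g where "D = dotw b" and "g = block_gap b"
  have "0 < D" "0 < D + g"
    unfolding D_def g_def using one_le_dotw[OF b(2,3)] block_gap_pos[of b] by simp_all
  then obtain \<delta> where "0 < \<delta>"
    and outer: "\<And>v. 0 < v \<Longrightarrow> D - \<delta> \<le> v \<Longrightarrow> v \<le> D + g + \<delta> \<Longrightarrow>
      \<alpha> - \<epsilon> \<le> log phi v \<and> log phi v \<le> \<gamma> + \<epsilon>"
    and inner: "\<And>v. 0 < v \<Longrightarrow> \<alpha> + \<epsilon> \<le> log phi v \<Longrightarrow> log phi v \<le> \<gamma> - \<epsilon> \<Longrightarrow>
      D + \<delta> \<le> v \<and> v \<le> D + g - \<delta>"
    unfolding \<alpha>_def \<gamma>_def D_def g_def
    using log_interval_margin[OF phi_gt_1 _ _ \<open>0 < \<epsilon>\<close>] by metis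
  obtain N where N: "4 / \<delta> < phi ^ N"
    using real_arch_pow[OF phi_gt_1] by blast
  have "\<forall>\<^sub>F m in at_top. max s N \<le> length (zeck m)"
    using filterlim_length_zeck unfolding filterlim_at_top by blast
  with eventually_gt_at_top[of 0] have "\<forall>\<^sub>F m in at_top. 0 < m \<and> max s N \<le> length (zeck m)"
    by (rule eventually_conj)
  then show ?thesis
  proof (rule eventually_mono)
    fix m :: nat
    assume m: "0 < m \<and> max s N \<le> length (zeck m)"
    define u where "u = frac (frakF_inv (real m))"
    define P where "P = phi ^ Suc (length (zeck m))"
    have "0 < P" "phi ^ N \<le> P"
      unfolding P_def using m phi_gt_1 by (simp, intro power_increasing) auto
    have "4 < \<delta> * phi ^ N"
      using N \<open>0 < \<delta>\<close> by (simp add: divide_less_eq mult.commute)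
    also have "\<dots> \<le> \<delta> * P"
      using \<open>phi ^ N \<le> P\<close> \<open>0 < \<delta>\<close> by simp
    finally have "4 / P \<le> \<delta>"
      using \<open>0 < P\<close> by (simp add: divide_le_eq mult.commute)
    have V: "0 < phi powr u" "log phi (phi powr u) = u"
      using phi_gt_1 by simp_all
    note approx = LB_eq_Some_approx[OF b, of m, folded u_def D_def g_def P_def]
    show "(LB s m = Some b \<longrightarrow> \<alpha> - \<epsilon> \<le> u \<and> u \<le> \<gamma> + \<epsilon>) \<and>
      (\<alpha> + \<epsilon> \<le> u \<and> u \<le> \<gamma> - \<epsilon> \<longrightarrow> LB s m = Some b)"
    proof (rule conjI; rule impI)
      assume "LB s m = Some b"
      then have "D - \<delta> \<le> phi powr u" "phi powr u \<le> D + g + \<delta>"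
        using approx(1) m \<open>4 / P \<le> \<delta>\<close> by auto
      then show "\<alpha> - \<epsilon> \<le> u \<and> u \<le> \<gamma> + \<epsilon>"
        using outer[OF V(1)] unfolding V(2) by blast
    next
      assume "\<alpha> + \<epsilon> \<le> u \<and> u \<le> \<gamma> - \<epsilon>"
      then have "D + \<delta> \<le> phi powr u" "phi powr u \<le> D + g - \<delta>"
        using inner[OF V(1)] unfolding V(2) by blast+
      then show "LB s m = Some b"
        using approx(2) m \<open>4 / P \<le> \<delta>\<close> by auto
    qed
  qed
qed

lemma filterlim_at_top_if_increasing:
  fixes K :: "nat \<Rightarrow> nat"
  assumes "\<forall>k\<ge>1. 0 < K k" "\<forall>k\<ge>1. K k < K (Suc k)"
  shows "filterlim K at_top sequentially"
proof (rule filterlim_at_top_mono[OF filterlim_ident])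
  have "k \<le> K k" if "1 \<le> k" for k
    using that
  proof (induction k rule: dec_induct)
    case base
    then show ?case using assms(1) by (simp add: Suc_le_eq)
  next
    case (step k)
    then show ?case using assms(2) by (simp add: Suc_le_eq le_less_trans)
  qed
  then show "\<forall>\<^sub>F k in sequentially. k \<le> K k"
    unfolding eventually_sequentially by blast
qed

theorem theorem4p5:
  fixes K :: "nat \<Rightarrow> nat"
  assumes pos: "\<forall>k\<ge>1. 0 < K k"
    and incr: "\<forall>k\<ge>1. K k < K (Suc k)"
    and equi: "equidistributed_frac (\<lambda>n. frakF_inv (real (K n)))"
  shows "\<forall>s\<ge>2. \<forall>b\<in>FS s.
    (\<lambda>n. real (card {k\<in>{1..n}. LB s (K k) = Some b}) / real n)
      \<longlonglongrightarrow> log phi (dotw (btilde s b) / dotw b)"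
proof (intro allI impI ballI)
  fix s b
  assume "2 \<le> s" "b \<in> FS s"
  then have b: "fib_admissible b" "b \<noteq> []" "hd b = 1" "length b = s"
    and btilde: "dotw (btilde s b) = dotw b + block_gap b" "dotw b + block_gap b \<le> phi"
    using FS_D dotw_btilde by auto
  define \<alpha> \<gamma> where "\<alpha> = log phi (dotw b)" and "\<gamma> = log phi (dotw b + block_gap b)"
  have "1 \<le> dotw b" "0 < block_gap b"
    using one_le_dotw[OF b(2,3)] block_gap_pos by simp_all
  then have bounds: "0 \<le> \<alpha>" "\<alpha> \<le> \<gamma>" "\<gamma> \<le> 1"
    and "log phi (dotw (btilde s b) / dotw b) = \<gamma> - \<alpha>"
    unfolding \<alpha>_def \<gamma>_def btilde(1) using btilde(2) phi_gt_1 by (simp_all add: log_divide)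
  moreover have "(\<lambda>n. real (card {k\<in>{1..n}. LB s (K k) = Some b}) / real n) \<longlonglongrightarrow> \<gamma> - \<alpha>"
    using b unfolding \<alpha>_def \<gamma>_def
    by (intro density_eq_if_frac_window[OF equi bounds[unfolded \<alpha>_def \<gamma>_def]]
        eventually_compose_filterlim[OF _ filterlim_at_top_if_increasing[OF pos incr]]
        eventually_LB_iff_frac_frakF_inv)
  ultimately show "(\<lambda>n. real (card {k\<in>{1..n}. LB s (K k) = Some b}) / real n)
      \<longlonglongrightarrow> log phi (dotw (btilde s b) / dotw b)"
    by simp
qed

end
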